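(* Let $\beta>0$. For any positive integers $k,m$ there exists $M_{k,m}\in\mathbb{R}$ such that for all positive integers $i_1,\dots,i_k$, \[ \mathbb{E}\left[\frac{\Delta(H_{mi_1})}{(mi_1)^{1/(2+\beta)}}\cdots\frac{\Delta(H_{mi_k})}{(mi_k)^{1/(2+\beta)}}\right]\le M_{k,m}, \] where $\Delta(G)$ denotes the maximum degree of $G$.
   Context: Fix a real $\beta>0$ and a positive integer $m$. The random tree process $(G^n_{1,\beta})_{n\ge1}$ is defined as follows. $G^1_{1,\beta}$ consists of a single vertex $v_1$ and no edges. Given $G^n_{1,\beta}$ with vertices $v_1,\dots,v_n$ and directed edges $e_2,\dots,e_n$ (where $e_i$ is the edge whose tail is $v_i$), $G^{n+1}_{1,\beta}$ is obtained by adding a vertex $v_{n+1}$ and a directed edge $e_{n+1}$ with tail $v_{n+1}$ and head a "target vertex" determined by a random variable $f_{n+1}$, independent of $f_2,\dots,f_n$, taking values in $\Omega_{n+1}=\{(i,v):1\le i\le n\}\cup\{(i,h),(i,t):2\le i\le n\}$ with $\Pr(f_{n+1}=(i,v))=\beta/((2+\beta)n-2)$ and $\Pr(f_{n+1}=(i,h))=\Pr(f_{n+1}=(i,t))=1/((2+\beta)n-2)$. If $f_{n+1}=(i,v)$ the target is $v_i$ (chosen "uniformly"); if $f_{n+1}=(i,h)$ the target is the head of $e_i$, and if $f_{n+1}=(i,t)$ the target is the tail $v_i$ of $e_i$ (chosen "preferentially", by copying the head half-edge, resp. tail half-edge, of $e_i$). Consequently the target is $v_i$ with probability $(d_n(v_i)+\beta)/((2+\beta)n-2)$,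 where $d_n(v)$ is the degree of $v$ in $G^n_{1,\beta}$. Each edge is regarded as two half-edges, one at each endpoint; the degree of a vertex is the number of half-edges at it (loops count twice). For $t\ge1$, $H_t$ is the undirected multigraph formed from $G^t_{1,\beta}$ by identifying, for each $j<\lceil t/m\rceil$, the vertices $v_{(j-1)m+1},\dots,v_{jm}$ into one vertex $w_j$, and identifying the remaining vertices into one vertex $w_{\lceil t/m\rceil}$ (all edges kept). Known input (M\'ori): for any positive integer $k$ there exists $\tilde M_k$ such that for all $n$, $\mathbb{E}\big[\big((\Delta(G^n_{1,\beta})+\beta)/n^{1/(2+\beta)}\big)^k\big]\le\tilde M_k$. *)

theory Defs
  imports "HOL-Probability.Probability"
begin

text \<open>A tree G^n (n >= 1) on vertices v_1..v_n is encoded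
  by the list hs of length n-1 where hs ! (i-2) is (the index of) the head of edge e_i
  (the tail of e_i is v_i), for 2 <= i <= n.\<close>

datatype choice = ChV nat | ChH nat | ChT nat

definition choice_pmf :: "real \<Rightarrow> nat \<Rightarrow> choice pmf" where
  "choice_pmf \<beta> n = embed_pmf (\<lambda>c. case c of
      ChV i \<Rightarrow> (if 1 \<le> i \<and> i \<le> n then \<beta> / ((2 + \<beta>) * real n - 2) else 0)
    | ChH i \<Rightarrow> (if 2 \<le> i \<and> i \<le> n then 1 / ((2 + \<beta>) * real n - 2) else 0)
    | ChT i \<Rightarrow> (if 2 \<le> i \<and> i \<le> n then 1 / ((2 + \<beta>) * real n - 2) else 0))"

text \<open>Target vertex determined by f: (i,v) gives v_i, (i,h) the head of e_i, (i,t) the tail v_i.\<close>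
fun target :: "nat list \<Rightarrow> choice \<Rightarrow> nat" where
  "target hs (ChV i) = i"
| "target hs (ChH i) = hs ! (i - 2)"
| "target hs (ChT i) = i"

fun tree_pmf :: "real \<Rightarrow> nat \<Rightarrow> nat list pmf" where
  "tree_pmf \<beta> 0 = return_pmf []"
| "tree_pmf \<beta> (Suc n) =
     (if n = 0 then return_pmf []
      else bind_pmf (tree_pmf \<beta> n) (\<lambda>hs.
             map_pmf (\<lambda>f. hs @ [target hs f]) (choice_pmf \<beta> n)))"

definition deg :: "nat list \<Rightarrow> nat \<Rightarrow> nat" where
  "deg hs v = (\<Sum>i\<in>{2..length hs + 1}.
      (if i = v then 1 else 0) + (if hs ! (i - 2) = v then 1 else 0))"

text \<open>In H_t the vertex v_j is identified into w_(blk m t j), where the last block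
  w_(ceil(t/m)) collects all remaining vertices.\<close>
definition blk :: "nat \<Rightarrow> nat \<Rightarrow> nat \<Rightarrow> nat" where
  "blk m t j = min ((j - 1) div m + 1) ((t + m - 1) div m)"

definition maxdeg_H :: "nat \<Rightarrow> nat \<Rightarrow> nat list \<Rightarrow> nat" where
  "maxdeg_H m t hs = Max ((\<lambda>b. \<Sum>j\<in>{1..t}. if blk m t j = b then deg hs j else 0)
                          ` {1..(t + m - 1) div m})"

end

theory Submission
  imports Defs
begin

(* Write D_n = (2 + beta) n - 2 and P_K(d) = (d + beta)(d + beta + 1)...(d + beta + K - 1).
   The new edge of G^{n+1} attaches to v with probability (deg v + beta) / D_n, and
   (d + beta) (P_K(d + 1) - P_K(d)) = K P_K(d).  Hence the potential Phi_n = sum_v P_K(deg v)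
   satisfies the exact recurrence  E Phi_{n+1} = (1 + K / D_n) E Phi_n + P_K(1),  whose solutions
   grow like n^(K / (2 + beta)).  This proves Mori's moment bound directly: Delta(G^t)^K <= Phi_t.
   Each vertex of H_t merges at most m vertices of G^t, so Delta(H_t) <= m Delta(G^t), and thus
   E (Delta(H_t) / t^(1/(2+beta)))^K is bounded uniformly in t.  Finally the tree process is
   consistent (G^t is the prefix of G^N), and for K >= k a product of k nonnegative numbers is at
   most the sum of 1 + (their K-th powers), which bounds the mixed moment of the corollary. *)

section \<open>A growth bound for linear recurrences\<close>

lemma powr_add_one_lower_bound:
  fixes x g :: real
  assumes "x > 0" "g \<ge> 1"
  shows "x powr g + g * x powr (g - 1) \<le> (x + 1) powr g"
proof -
  have "\<exists>z. x < z \<and> z < x + 1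
           \<and> (x + 1) powr g - x powr g = ((x + 1) - x) * (g * z powr (g - 1))"
    using assms by (intro MVT2) (auto intro!: has_real_derivative_powr)
  then obtain z where z: "x < z" "z < x + 1"
    and mvt: "(x + 1) powr g - x powr g = ((x + 1) - x) * (g * z powr (g - 1))"
    by blast
  have "x powr (g - 1) \<le> z powr (g - 1)"
    using z assms by (intro powr_mono2) auto
  then have "g * x powr (g - 1) \<le> g * z powr (g - 1)" using assms by (simp add: mult_left_mono)
  then show ?thesis using mvt by simp
qed

text \<open>A nonnegative sequence with S(n+1) <= (1 + g/(n - b)) S(n) + c, where 0 <= b < 1 and
  g > 1, grows at most like n^g.  The proof compares S with A (n - b)^g - D (n - b).\<close>
lemma recurrence_powr_bound:
  fixes S :: "nat \<Rightarrow> real" and b g c :: real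
  assumes S: "\<And>n. n \<ge> 1 \<Longrightarrow> S (Suc n) \<le> (1 + g / (real n - b)) * S n + c"
    and b: "0 \<le> b" "b < 1" and g: "g > 1" and c: "c \<ge> 0"
    and S_nonneg: "\<And>n. n \<ge> 1 \<Longrightarrow> S n \<ge> 0"
  shows "\<exists>A. \<forall>n\<ge>1. S n \<le> A * real n powr g"
proof -
  define D where "D = c / (g - 1)"
  define A where "A = (S 1 + D * (1 - b)) / (1 - b) powr g"
  have D: "D \<ge> 0" "D * (g - 1) = c" using g c by (auto simp: D_def)
  have A: "A \<ge> 0" using S_nonneg[of 1] D b by (simp add: A_def)
  have comparison: "S n \<le> A * (real n - b) powr g - D * (real n - b)" if "n \<ge> 1" for n
    using that
  proof (induction n rule: dec_induct)
    case base
    then show ?case using b by (simp add: A_def)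
  next
    case (step n)
    define x where "x = real n - b"
    have x: "x > 0" using step b by (simp add: x_def)
    have "S (Suc n) \<le> (1 + g / x) * S n + c" using S step by (simp add: x_def)
    also have "\<dots> \<le> (1 + g / x) * (A * x powr g - D * x) + c"
      using step.IH x g by (intro add_right_mono mult_left_mono) (auto simp: x_def)
    also have "\<dots> = A * (x powr g + g * (x powr g / x)) - D * x - D * g + c"
      using x by (simp add: field_simps)
    also have "x powr g / x = x powr (g - 1)" using x by (simp add: powr_diff)
    also have "A * (x powr g + g * x powr (g - 1)) \<le> A * (x + 1) powr g"
      using powr_add_one_lower_bound[OF x] g A by (intro mult_left_mono) auto
    finally show ?case using D by (simp add: x_def algebra_simps)
  qed
  show ?thesis
  proof (intro exI allI impI)
    fix n :: nat assume n: "n \<ge> 1"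
    have "D * (real n - b) \<ge> 0" using D n b by simp
    then have "S n \<le> A * (real n - b) powr g" using comparison[OF n] by linarith
    also have "\<dots> \<le> A * real n powr g"
      using A n b g by (intro mult_left_mono powr_mono2) auto
    finally show "S n \<le> A * real n powr g" .
  qed
qed

lemma expectation_bind_pmf_finite:
  fixes h :: "'b \<Rightarrow> real"
  assumes "finite (set_pmf p)" and "\<And>x. x \<in> set_pmf p \<Longrightarrow> finite (set_pmf (f x))"
  shows "measure_pmf.expectation (bind_pmf p f) h
           = measure_pmf.expectation p (\<lambda>x. measure_pmf.expectation (f x) h)"
  using assms
  by (simp add: pmf_expectation_bind[of "set_pmf p"] integral_measure_pmf_real[of "set_pmf p"]
      mult.commute)

definition choice_weight :: "real \<Rightarrow> nat \<Rightarrow> choice \<Rightarrow> real" where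
  "choice_weight \<beta> n = (\<lambda>c. case c of
      ChV i \<Rightarrow> (if 1 \<le> i \<and> i \<le> n then \<beta> / ((2 + \<beta>) * real n - 2) else 0)
    | ChH i \<Rightarrow> (if 2 \<le> i \<and> i \<le> n then 1 / ((2 + \<beta>) * real n - 2) else 0)
    | ChT i \<Rightarrow> (if 2 \<le> i \<and> i \<le> n then 1 / ((2 + \<beta>) * real n - 2) else 0))"

definition choice_support :: "nat \<Rightarrow> choice set" where
  "choice_support n = ChV ` {1..n} \<union> ChH ` {2..n} \<union> ChT ` {2..n}"

lemma finite_choice_support: "finite (choice_support n)"
  by (simp add: choice_support_def)

lemma sum_choice_support:
  "(\<Sum>c\<in>choice_support n. h c)
     = (\<Sum>i=1..n. h (ChV i)) + (\<Sum>i=2..n. h (ChH i)) + (\<Sum>i=2..n. h (ChT i))"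
proof -
  have "sum h (choice_support n)
          = sum h (ChV ` {1..n} \<union> ChH ` {2..n}) + sum h (ChT ` {2..n})"
    unfolding choice_support_def by (rule sum.union_disjoint) auto
  also have "sum h (ChV ` {1..n} \<union> ChH ` {2..n}) = sum h (ChV ` {1..n}) + sum h (ChH ` {2..n})"
    by (rule sum.union_disjoint) auto
  finally show ?thesis by (simp add: sum.reindex inj_on_def)
qed

lemma normaliser_pos:
  assumes "\<beta> > 0" "n \<ge> 1"
  shows "(2 + \<beta>) * real n - 2 > 0"
proof -
  have "2 + \<beta> \<le> (2 + \<beta>) * real n" using mult_left_mono[of 1 "real n" "2 + \<beta>"] assms by simp
  then show ?thesis using assms by linarith
qed

lemma choice_weight_nonneg: "\<beta> > 0 \<Longrightarrow> n \<ge> 1 \<Longrightarrow> choice_weight \<beta> n c \<ge> 0"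
  using normaliser_pos[of \<beta> n] by (auto simp: choice_weight_def split: choice.split)

lemma choice_weight_outside: "c \<notin> choice_support n \<Longrightarrow> choice_weight \<beta> n c = 0"
  by (cases c) (auto simp: choice_weight_def choice_support_def)

lemma choice_weight_sum:
  assumes b: "\<beta> > 0" and n: "n \<ge> 1"
  shows "(\<Sum>c\<in>choice_support n. choice_weight \<beta> n c) = 1"
proof -
  have "(\<Sum>c\<in>choice_support n. choice_weight \<beta> n c)
          = (real n * \<beta> + 2 * real (n - 1)) / ((2 + \<beta>) * real n - 2)"
    by (simp add: sum_choice_support choice_weight_def add_divide_distrib)
  also have "real n * \<beta> + 2 * real (n - 1) = (2 + \<beta>) * real n - 2"
    using n by (simp add: of_nat_diff algebra_simps)
  finally show ?thesis using normaliser_pos[OF b n] by simp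
qed

lemma pmf_choice_pmf:
  assumes b: "\<beta> > 0" and n: "n \<ge> 1"
  shows "pmf (choice_pmf \<beta> n) c = choice_weight \<beta> n c"
proof -
  have "(\<integral>\<^sup>+x. ennreal (choice_weight \<beta> n x) \<partial>count_space UNIV) = 1"
    using choice_weight_nonneg[OF b n] choice_weight_sum[OF b n]
    by (subst nn_integral_count_space'[of "choice_support n"])
       (auto simp: finite_choice_support choice_weight_outside sum_ennreal)
  then show ?thesis
    unfolding choice_pmf_def choice_weight_def[symmetric]
    by (intro pmf_embed_pmf) (auto intro: choice_weight_nonneg[OF b n])
qed

lemma set_choice_pmf: "\<beta> > 0 \<Longrightarrow> n \<ge> 1 \<Longrightarrow> set_pmf (choice_pmf \<beta> n) \<subseteq> choice_support n"
  using pmf_choice_pmf choice_weight_outside by (metis set_pmf_iff subsetI)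

lemma finite_set_choice_pmf: "\<beta> > 0 \<Longrightarrow> n \<ge> 1 \<Longrightarrow> finite (set_pmf (choice_pmf \<beta> n))"
  using set_choice_pmf finite_choice_support finite_subset by blast

lemma expectation_choice_pmf:
  "\<beta> > 0 \<Longrightarrow> n \<ge> 1 \<Longrightarrow> measure_pmf.expectation (choice_pmf \<beta> n) h
     = (\<Sum>c\<in>choice_support n. h c * choice_weight \<beta> n c)"
  by (subst integral_measure_pmf_real[of "choice_support n"])
     (auto simp: finite_choice_support pmf_choice_pmf dest: set_choice_pmf)

lemma head_in_range:
  assumes hs: "length hs = n - 1" "set hs \<subseteq> {1..n}" and i: "i \<in> {2..n}"
  shows "hs ! (i - 2) \<in> {1..n}"
proof -
  have "i - 2 < length hs" using hs i by auto
  then show ?thesis using hs(2) nth_mem by blast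
qed

lemma target_in_range:
  assumes "c \<in> choice_support n" "length hs = n - 1" "set hs \<subseteq> {1..n}"
  shows "target hs c \<in> {1..n}"
  using assms head_in_range by (auto simp: choice_support_def)

lemma tree_pmf_shape:
  assumes b: "\<beta> > 0" and hs: "hs \<in> set_pmf (tree_pmf \<beta> n)"
  shows "length hs = n - 1 \<and> set hs \<subseteq> {1..n}"
  using hs
proof (induction n arbitrary: hs)
  case (Suc n)
  show ?case
  proof (cases "n = 0")
    case False
    then obtain hs0 c where hs0: "hs0 \<in> set_pmf (tree_pmf \<beta> n)" "c \<in> choice_support n"
      and hs: "hs = hs0 @ [target hs0 c]"
      using Suc.prems set_choice_pmf[OF b, of n] by auto
    have "length hs0 = n - 1" "set hs0 \<subseteq> {1..n}" using Suc.IH[OF hs0(1)] by auto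
    moreover from this have "target hs0 c \<in> {1..n}"
      by (intro target_in_range[OF hs0(2)])
    ultimately show ?thesis using hs False by auto
  qed (use Suc in auto)
qed simp

lemma finite_set_tree_pmf: "\<beta> > 0 \<Longrightarrow> finite (set_pmf (tree_pmf \<beta> n))"
  by (induction n) (auto simp: finite_set_choice_pmf)

lemma tree_pmf_prefix:
  assumes b: "\<beta> > 0"
  shows "1 \<le> t \<Longrightarrow> t \<le> N \<Longrightarrow> map_pmf (take (t - 1)) (tree_pmf \<beta> N) = tree_pmf \<beta> t"
proof (induction N)
  case (Suc n)
  show ?case
  proof (cases "t = Suc n")
    case True
    have "map_pmf (take (t - 1)) (tree_pmf \<beta> (Suc n)) = map_pmf id (tree_pmf \<beta> (Suc n))"
      using tree_pmf_shape[OF b, of _ "Suc n"] True by (intro map_pmf_cong) auto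
    then show ?thesis using True by (simp add: pmf.map_id)
  next
    case False
    hence tn: "t \<le> n" "n \<noteq> 0" using Suc by auto
    have "map_pmf (take (t - 1)) (tree_pmf \<beta> (Suc n))
        = bind_pmf (tree_pmf \<beta> n) (\<lambda>hs. return_pmf (take (t - 1) hs))"
      unfolding tree_pmf.simps if_not_P[OF tn(2)] map_bind_pmf
    proof (intro bind_pmf_cong refl)
      fix hs assume "hs \<in> set_pmf (tree_pmf \<beta> n)"
      hence "length hs = n - 1" using tree_pmf_shape[OF b] by blast
      hence "map_pmf (take (t - 1)) (map_pmf (\<lambda>f. hs @ [target hs f]) (choice_pmf \<beta> n))
               = map_pmf (\<lambda>_. take (t - 1) hs) (choice_pmf \<beta> n)"
        using tn unfolding pmf.map_comp by (intro map_pmf_cong) auto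
      thus "map_pmf (take (t - 1)) (map_pmf (\<lambda>f. hs @ [target hs f]) (choice_pmf \<beta> n))
              = return_pmf (take (t - 1) hs)"
        by (simp add: map_pmf_const)
    qed
    also have "\<dots> = tree_pmf \<beta> t" using Suc tn by (simp flip: map_pmf_def)
    finally show ?thesis .
  qed
qed simp

section \<open>Degrees and preferential attachment\<close>

text \<open>Counting half-edges: each edge e_i contributes its tail v_i and its head.\<close>
lemma degree_weighted_sum:
  assumes hs: "length hs = n - 1" "set hs \<subseteq> {1..n}" and n: "n \<ge> 1"
  shows "(\<Sum>v\<in>{1..n}. real (deg hs v) * g v) = (\<Sum>i\<in>{2..n}. g i + g (hs ! (i - 2)))"
proof -
  have L: "length hs + 1 = n" using hs n by simp
  have "(\<Sum>v\<in>{1..n}. real (deg hs v) * g v)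
          = (\<Sum>i\<in>{2..n}. \<Sum>v\<in>{1..n}. (if i = v then g v else 0) + (if hs ! (i - 2) = v then g v else 0))"
    unfolding deg_def L by (subst sum.swap) (auto simp: sum_distrib_right intro!: sum.cong)
  also have "\<dots> = (\<Sum>i\<in>{2..n}. g i + g (hs ! (i - 2)))"
    using head_in_range[OF hs] by (intro sum.cong refl) (auto simp: sum.distrib)
  finally show ?thesis .
qed

lemma target_law:
  assumes b: "\<beta> > 0" and n: "n \<ge> 1" and hs: "length hs = n - 1" "set hs \<subseteq> {1..n}"
  shows "measure_pmf.expectation (choice_pmf \<beta> n) (\<lambda>c. g (target hs c))
           = (\<Sum>v\<in>{1..n}. (real (deg hs v) + \<beta>) * g v) / ((2 + \<beta>) * real n - 2)"
proof -
  define D where "D = (2 + \<beta>) * real n - 2"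
  have "measure_pmf.expectation (choice_pmf \<beta> n) (\<lambda>c. g (target hs c))
          = (\<beta> * (\<Sum>i=1..n. g i) + (\<Sum>i=2..n. g (hs ! (i - 2))) + (\<Sum>i=2..n. g i)) / D"
    by (simp add: expectation_choice_pmf[OF b n] sum_choice_support choice_weight_def D_def
        sum_distrib_left sum_divide_distrib add_divide_distrib mult.commute)
  also have "\<dots> = (\<Sum>v\<in>{1..n}. (real (deg hs v) + \<beta>) * g v) / D"
    using degree_weighted_sum[OF hs n, of g]
    by (simp add: distrib_right sum.distrib sum_distrib_left)
  finally show ?thesis by (simp add: D_def)
qed

lemma deg_append:
  assumes "length hs = n - 1" "n \<ge> 1"
  shows "deg (hs @ [v]) j = deg hs j + (if j = n + 1 then 1 else 0) + (if v = j then 1 else 0)"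
proof -
  have L: "length (hs @ [v]) + 1 = n + 1" "length hs + 1 = n" using assms by auto
  have I: "{2..n+1} = insert (n+1) {2..n}" using assms by auto
  have "deg (hs @ [v]) j
          = (\<Sum>i\<in>{2..n}. (if i = j then 1 else 0) + (if (hs @ [v]) ! (i - 2) = j then 1 else 0))
            + ((if n + 1 = j then 1 else 0) + (if (hs @ [v]) ! (n + 1 - 2) = j then 1 else 0))"
    unfolding deg_def L I by (simp add: add_ac)
  also have "(\<Sum>i\<in>{2..n}. (if i = j then 1 else 0) + (if (hs @ [v]) ! (i - 2) = j then 1 else 0))
               = deg hs j"
    unfolding deg_def L using assms by (intro sum.cong refl) (auto simp: nth_append)
  also have "(hs @ [v]) ! (n + 1 - 2) = v" using assms by (simp add: nth_append)
  finally show ?thesis by auto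
qed

lemma deg_new_vertex:
  assumes "length hs = n - 1" "set hs \<subseteq> {1..n}"
  shows "deg hs (n + 1) = 0"
proof -
  have "hs ! (i - 2) \<noteq> n + 1" if "i \<in> {2..n}" for i
    using head_in_range[OF assms that] by simp
  then show ?thesis unfolding deg_def using assms by (intro sum.neutral) auto
qed

section \<open>The rising-factorial potential\<close>

definition rising_deg :: "real \<Rightarrow> nat \<Rightarrow> nat \<Rightarrow> real" where
  "rising_deg \<beta> K d = pochhammer (real d + \<beta>) K"

definition degree_potential :: "real \<Rightarrow> nat \<Rightarrow> nat \<Rightarrow> nat list \<Rightarrow> real" where
  "degree_potential \<beta> K n hs = (\<Sum>j\<in>{1..n}. rising_deg \<beta> K (deg hs j))"

lemma rising_deg_nonneg: "\<beta> > 0 \<Longrightarrow> rising_deg \<beta> K d \<ge> 0"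
  by (simp add: rising_deg_def pochhammer_nonneg)

lemma power_le_rising_deg: "\<beta> > 0 \<Longrightarrow> real d ^ K \<le> rising_deg \<beta> K d"
proof -
  assume b: "\<beta> > 0"
  have "real d ^ K = (\<Prod>i\<in>{0..<K}. real d)" by simp
  also have "\<dots> \<le> (\<Prod>i\<in>{0..<K}. real d + \<beta> + real i)" using b by (intro prod_mono) auto
  finally show ?thesis by (simp add: rising_deg_def pochhammer_prod)
qed

lemma rising_deg_increment:
  assumes "K \<ge> 1"
  shows "(real d + \<beta>) * (rising_deg \<beta> K (d + 1) - rising_deg \<beta> K d) = real K * rising_deg \<beta> K d"
proof -
  obtain K' where K: "K = Suc K'" using assms by (cases K) auto
  define a where "a = real d + \<beta>"
  have "rising_deg \<beta> K d = a * pochhammer (a + 1) K'"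
    by (simp add: rising_deg_def K pochhammer_rec a_def)
  moreover have "rising_deg \<beta> K (d + 1) = (a + 1 + real K') * pochhammer (a + 1) K'"
    by (simp add: rising_deg_def K pochhammer_rec' a_def add_ac)
  ultimately show ?thesis by (simp add: K a_def algebra_simps)
qed

lemma degree_potential_append:
  assumes hs: "length hs = n - 1" "set hs \<subseteq> {1..n}" and n: "n \<ge> 1" and v: "v \<in> {1..n}"
  shows "degree_potential \<beta> K (n + 1) (hs @ [v])
           = degree_potential \<beta> K n hs + rising_deg \<beta> K 1
             + (rising_deg \<beta> K (deg hs v + 1) - rising_deg \<beta> K (deg hs v))"
proof -
  have I: "{1..n+1} = insert (n+1) {1..n}" by auto
  have "rising_deg \<beta> K (deg (hs @ [v]) (n + 1)) = rising_deg \<beta> K 1"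
    using deg_append[OF hs(1) n, of v "n + 1"] deg_new_vertex[OF hs] v by simp
  moreover have "(\<Sum>j\<in>{1..n}. rising_deg \<beta> K (deg (hs @ [v]) j))
      = (\<Sum>j\<in>{1..n}. rising_deg \<beta> K (deg hs j)
           + (if v = j then rising_deg \<beta> K (deg hs j + 1) - rising_deg \<beta> K (deg hs j) else 0))"
    using deg_append[OF hs(1) n, of v] by (intro sum.cong refl) auto
  ultimately show ?thesis
    using v by (simp add: degree_potential_def I sum.distrib)
qed

lemma degree_potential_step:
  assumes b: "\<beta> > 0" and K: "K \<ge> 1" and n: "n \<ge> 1"
    and hs: "length hs = n - 1" "set hs \<subseteq> {1..n}"
  shows "measure_pmf.expectation (choice_pmf \<beta> n)
           (\<lambda>c. degree_potential \<beta> K (n + 1) (hs @ [target hs c]))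
         = (1 + real K / ((2 + \<beta>) * real n - 2)) * degree_potential \<beta> K n hs + rising_deg \<beta> K 1"
proof -
  define inc where "inc v = rising_deg \<beta> K (deg hs v + 1) - rising_deg \<beta> K (deg hs v)" for v
  have "measure_pmf.expectation (choice_pmf \<beta> n)
          (\<lambda>c. degree_potential \<beta> K (n + 1) (hs @ [target hs c]))
        = measure_pmf.expectation (choice_pmf \<beta> n)
          (\<lambda>c. (degree_potential \<beta> K n hs + rising_deg \<beta> K 1) + inc (target hs c))"
  proof (intro integral_cong_AE AE_pmfI)
    fix c assume "c \<in> set_pmf (choice_pmf \<beta> n)"
    then have "target hs c \<in> {1..n}" using set_choice_pmf[OF b n] target_in_range[OF _ hs] by blast
    then show "degree_potential \<beta> K (n + 1) (hs @ [target hs c])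
                 = (degree_potential \<beta> K n hs + rising_deg \<beta> K 1) + inc (target hs c)"
      unfolding inc_def by (rule degree_potential_append[OF hs n])
  qed simp_all
  also have "\<dots> = degree_potential \<beta> K n hs + rising_deg \<beta> K 1
                  + measure_pmf.expectation (choice_pmf \<beta> n) (\<lambda>c. inc (target hs c))"
    by (simp add: integrable_measure_pmf_finite finite_set_choice_pmf[OF b n])
  also have "measure_pmf.expectation (choice_pmf \<beta> n) (\<lambda>c. inc (target hs c))
               = (\<Sum>v\<in>{1..n}. (real (deg hs v) + \<beta>) * inc v) / ((2 + \<beta>) * real n - 2)"
    by (rule target_law[OF b n hs])
  also have "(\<Sum>v\<in>{1..n}. (real (deg hs v) + \<beta>) * inc v) = real K * degree_potential \<beta> K n hs"
    unfolding degree_potential_def sum_distrib_left inc_def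
    using rising_deg_increment[OF K] by simp
  finally show ?thesis by (simp add: algebra_simps)
qed

definition expected_potential :: "real \<Rightarrow> nat \<Rightarrow> nat \<Rightarrow> real" where
  "expected_potential \<beta> K n = measure_pmf.expectation (tree_pmf \<beta> n) (degree_potential \<beta> K n)"

lemma expected_potential_nonneg: "\<beta> > 0 \<Longrightarrow> expected_potential \<beta> K n \<ge> 0"
  unfolding expected_potential_def degree_potential_def
  by (intro integral_nonneg_AE AE_I2 sum_nonneg rising_deg_nonneg)

lemma expected_potential_recurrence:
  assumes b: "\<beta> > 0" and K: "K \<ge> 1" and n: "n \<ge> 1"
  shows "expected_potential \<beta> K (Suc n)
           = (1 + real K / ((2 + \<beta>) * real n - 2)) * expected_potential \<beta> K n + rising_deg \<beta> K 1"
proof -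
  have fin: "finite (set_pmf (tree_pmf \<beta> n))" by (rule finite_set_tree_pmf[OF b])
  have "expected_potential \<beta> K (Suc n) = measure_pmf.expectation (tree_pmf \<beta> n)
      (\<lambda>hs. measure_pmf.expectation (choice_pmf \<beta> n)
              (\<lambda>c. degree_potential \<beta> K (n + 1) (hs @ [target hs c])))"
    unfolding expected_potential_def using n
    by (simp add: expectation_bind_pmf_finite[OF fin] finite_set_choice_pmf[OF b])
  also have "\<dots> = measure_pmf.expectation (tree_pmf \<beta> n)
      (\<lambda>hs. (1 + real K / ((2 + \<beta>) * real n - 2)) * degree_potential \<beta> K n hs + rising_deg \<beta> K 1)"
    using tree_pmf_shape[OF b] degree_potential_step[OF b K n]
    by (intro integral_cong_AE AE_pmfI) simp_all
  finally show ?thesis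
    by (simp add: expected_potential_def integrable_measure_pmf_finite[OF fin])
qed

lemma expected_potential_growth:
  assumes b: "\<beta> > 0" and K: "real K > 2 + \<beta>"
  shows "\<exists>A. \<forall>n\<ge>1. expected_potential \<beta> K n \<le> A * real n powr (real K / (2 + \<beta>))"
proof (rule recurrence_powr_bound)
  show "expected_potential \<beta> K (Suc n)
          \<le> (1 + (real K / (2 + \<beta>)) / (real n - 2 / (2 + \<beta>))) * expected_potential \<beta> K n
            + rising_deg \<beta> K 1"
    if n: "n \<ge> 1" for n
  proof -
    have "real n - 2 / (2 + \<beta>) = ((2 + \<beta>) * real n - 2) / (2 + \<beta>)"
      using b by (simp add: field_simps)
    then have "(real K / (2 + \<beta>)) / (real n - 2 / (2 + \<beta>)) = real K / ((2 + \<beta>) * real n - 2)"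
      using b normaliser_pos[OF b n] by simp
    moreover have "K \<ge> 1" using K b by linarith
    ultimately show ?thesis using expected_potential_recurrence[OF b _ n] by simp
  qed
  show "0 \<le> 2 / (2 + \<beta>)" "2 / (2 + \<beta>) < 1" "1 < real K / (2 + \<beta>)" "0 \<le> rising_deg \<beta> K 1"
    using b K by (auto simp: rising_deg_nonneg field_simps)
qed (use expected_potential_nonneg[OF b] in blast)

section \<open>Maximum degree of the merged graph H_t\<close>

lemma blk_eq: "m > 0 \<Longrightarrow> 1 \<le> j \<Longrightarrow> j \<le> t \<Longrightarrow> blk m t j = (j - 1) div m + 1"
proof -
  assume m: "m > 0" and j: "1 \<le> j" "j \<le> t"
  have "(j - 1) div m + 1 = (j - 1 + m) div m" using m by simp
  also have "\<dots> \<le> (t + m - 1) div m" using j by (intro div_le_mono) auto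
  finally show ?thesis by (simp add: blk_def)
qed

lemma block_card_le:
  assumes m: "m > 0"
  shows "card {j\<in>{1..t}. blk m t j = b} \<le> m"
proof -
  have "{j\<in>{1..t}. blk m t j = b} \<subseteq> (\<lambda>l. (b - 1) * m + 1 + l) ` {..<m}"
  proof
    fix j assume "j \<in> {j\<in>{1..t}. blk m t j = b}"
    hence j: "1 \<le> j" "(j - 1) div m = b - 1" using blk_eq[OF m] by auto
    have "j - 1 = (b - 1) * m + (j - 1) mod m" by (metis div_mult_mod_eq j(2))
    hence "j = (b - 1) * m + 1 + (j - 1) mod m" using j(1) by linarith
    thus "j \<in> (\<lambda>l. (b - 1) * m + 1 + l) ` {..<m}" using m by auto
  qed
  then have "card {j\<in>{1..t}. blk m t j = b} \<le> card ((\<lambda>l. (b - 1) * m + 1 + l) ` {..<m})"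
    by (intro card_mono) auto
  also have "\<dots> \<le> m" using card_image_le[of "{..<m}"] by simp
  finally show ?thesis .
qed

lemma maxdeg_H_le:
  assumes m: "m > 0" and t: "t \<ge> 1"
  shows "maxdeg_H m t hs \<le> m * Max (deg hs ` {1..t})"
proof -
  define Dm where "Dm = Max (deg hs ` {1..t})"
  have "1 \<le> (t + m - 1) div m" using div_le_mono[of m "t + m - 1" m] m t by simp
  hence nonempty: "{1..(t + m - 1) div m} \<noteq> {}" by auto
  have "(\<Sum>j\<in>{1..t}. if blk m t j = b then deg hs j else 0) \<le> m * Dm" for b
  proof -
    have "(\<Sum>j\<in>{1..t}. if blk m t j = b then deg hs j else 0)
            = (\<Sum>j\<in>{j\<in>{1..t}. blk m t j = b}. deg hs j)"
      by (rule sum.inter_filter[symmetric]) simp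
    also have "\<dots> \<le> card {j\<in>{1..t}. blk m t j = b} * Dm"
    proof -
      have "deg hs j \<le> Dm" if "j \<in> {1..t}" for j unfolding Dm_def using that by (intro Max_ge) auto
      then show ?thesis using sum_bounded_above[of "{j\<in>{1..t}. blk m t j = b}" "deg hs" Dm] by auto
    qed
    also have "\<dots> \<le> m * Dm" using block_card_le[OF m] by (intro mult_right_mono) auto
    finally show ?thesis .
  qed
  thus ?thesis unfolding maxdeg_H_def Dm_def[symmetric] using nonempty by (subst Max_le_iff) auto
qed

lemma maxdeg_H_power_le:
  assumes b: "\<beta> > 0" and m: "m > 0" and t: "t \<ge> 1"
  shows "real (maxdeg_H m t hs) ^ K \<le> real m ^ K * degree_potential \<beta> K t hs"
proof -
  have "Max (deg hs ` {1..t}) \<in> deg hs ` {1..t}" using t by (intro Max_in) auto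
  then obtain j0 where j0: "j0 \<in> {1..t}" "Max (deg hs ` {1..t}) = deg hs j0" by auto
  have "real (maxdeg_H m t hs) ^ K \<le> (real m * real (deg hs j0)) ^ K"
    using maxdeg_H_le[OF m t, of hs] j0 by (intro power_mono) (auto simp flip: of_nat_mult)
  also have "\<dots> = real m ^ K * real (deg hs j0) ^ K" by (simp add: power_mult_distrib)
  also have "real (deg hs j0) ^ K \<le> rising_deg \<beta> K (deg hs j0)" by (rule power_le_rising_deg[OF b])
  also have "rising_deg \<beta> K (deg hs j0) \<le> degree_potential \<beta> K t hs"
    unfolding degree_potential_def using j0 rising_deg_nonneg[OF b] by (intro member_le_sum) auto
  finally show ?thesis by (simp add: mult_left_mono)
qed

lemma maxdeg_H_moment_bound:
  assumes b: "\<beta> > 0" and m: "m > 0" and K: "real K > 2 + \<beta>"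
  shows "\<exists>B. \<forall>t N. 1 \<le> t \<longrightarrow> t \<le> N \<longrightarrow> measure_pmf.expectation (tree_pmf \<beta> N)
           (\<lambda>hs. (real (maxdeg_H m t (take (t - 1) hs)) / real t powr (1 / (2 + \<beta>))) ^ K) \<le> B"
proof -
  obtain A where A: "\<And>n. n \<ge> 1 \<Longrightarrow> expected_potential \<beta> K n \<le> A * real n powr (real K / (2 + \<beta>))"
    using expected_potential_growth[OF b K] by blast
  have "measure_pmf.expectation (tree_pmf \<beta> N)
          (\<lambda>hs. (real (maxdeg_H m t (take (t - 1) hs)) / real t powr (1 / (2 + \<beta>))) ^ K)
          \<le> real m ^ K * A" if t: "1 \<le> t" "t \<le> N" for t N
  proof -
    define c where "c = real t powr (real K / (2 + \<beta>))"
    have c: "c > 0" "(real t powr (1 / (2 + \<beta>))) ^ K = c" using t by (simp_all add: c_def powr_power)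
    have fin: "finite (set_pmf (tree_pmf \<beta> t))" by (rule finite_set_tree_pmf[OF b])
    have "measure_pmf.expectation (tree_pmf \<beta> N)
            (\<lambda>hs. (real (maxdeg_H m t (take (t - 1) hs)) / real t powr (1 / (2 + \<beta>))) ^ K)
          = measure_pmf.expectation (tree_pmf \<beta> t) (\<lambda>hs. real (maxdeg_H m t hs) ^ K / c)"
      using tree_pmf_prefix[OF b t, symmetric] c(2) by (simp add: power_divide)
    also have "\<dots> \<le> measure_pmf.expectation (tree_pmf \<beta> t)
                      (\<lambda>hs. real m ^ K * degree_potential \<beta> K t hs / c)"
      using maxdeg_H_power_le[OF b m t(1)] c(1)
      by (intro integral_mono integrable_measure_pmf_finite[OF fin] divide_right_mono) auto
    also have "\<dots> = real m ^ K * expected_potential \<beta> K t / c"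
      by (simp add: expected_potential_def)
    also have "\<dots> \<le> real m ^ K * (A * c) / c"
      using A[OF t(1)] c(1) by (intro divide_right_mono mult_left_mono) (auto simp: c_def)
    also have "\<dots> = real m ^ K * A" using c(1) by simp
    finally show ?thesis .
  qed
  then show ?thesis by blast
qed

text \<open>A product of k nonnegative numbers is at most the sum of 1 + (their K-th powers), K >= k;
  this reduces mixed moments to pure K-th moments.\<close>
lemma prod_le_sum_one_plus_power:
  fixes x :: "nat \<Rightarrow> real"
  assumes k: "k > 0" and K: "K \<ge> k" and x: "\<And>j. j < k \<Longrightarrow> x j \<ge> 0"
  shows "(\<Prod>j<k. x j) \<le> (\<Sum>j<k. 1 + x j ^ K)"
proof -
  have "Max (x ` {..<k}) \<in> x ` {..<k}" using k by (intro Max_in) auto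
  then obtain j0 where j0: "j0 < k" "Max (x ` {..<k}) = x j0" by auto
  have "(\<Prod>j<k. x j) \<le> (\<Prod>j<k. x j0)"
    using x j0 by (intro prod_mono) (auto intro: Max_ge simp flip: j0(2))
  also have "\<dots> = x j0 ^ k" by simp
  also have "\<dots> \<le> 1 + x j0 ^ K"
  proof (cases "x j0 \<le> 1")
    case True
    then show ?thesis using x[OF j0(1)] power_le_one[of "x j0" k] by (smt (verit) zero_le_power)
  next
    case False
    then have "x j0 ^ k \<le> x j0 ^ K" using K by (intro power_increasing) auto
    then show ?thesis by simp
  qed
  also have "\<dots> \<le> (\<Sum>j<k. 1 + x j ^ K)"
    using member_le_sum[of j0 "{..<k}" "\<lambda>j. 1 + x j ^ K"] j0 x by auto
  finally show ?thesis .
qed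

theorem corollary7:
  fixes \<beta> :: real and k m :: nat
  assumes "\<beta> > 0" and "k > 0" and "m > 0"
  shows "\<exists>M :: real. \<forall>i :: nat \<Rightarrow> nat. (\<forall>j<k. i j > 0) \<longrightarrow>
           measure_pmf.expectation (tree_pmf \<beta> (m * Max (i ` {..<k})))
             (\<lambda>hs. \<Prod>j<k. real (maxdeg_H m (m * i j) (take (m * i j - 1) hs))
                            / real (m * i j) powr (1 / (2 + \<beta>))) \<le> M"
proof -
  note b = assms(1) and k = assms(2) and m = assms(3)
  obtain K :: nat where K: "real K > 2 + \<beta> + real k" using reals_Archimedean2 by blast
  then have Kk: "K \<ge> k" using b by simp
  obtain B where B: "\<And>t N. 1 \<le> t \<Longrightarrow> t \<le> N \<Longrightarrow> measure_pmf.expectation (tree_pmf \<beta> N)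
           (\<lambda>hs. (real (maxdeg_H m t (take (t - 1) hs)) / real t powr (1 / (2 + \<beta>))) ^ K) \<le> B"
    using maxdeg_H_moment_bound[OF b m, of K] K b by auto
  show ?thesis
  proof (intro exI allI impI)
    fix i :: "nat \<Rightarrow> nat" assume i: "\<forall>j<k. i j > 0"
    define N where "N = m * Max (i ` {..<k})"
    define X where "X j hs = real (maxdeg_H m (m * i j) (take (m * i j - 1) hs))
                               / real (m * i j) powr (1 / (2 + \<beta>))" for j hs
    have t: "1 \<le> m * i j" "m * i j \<le> N" if "j < k" for j
      using i that m by (auto simp: N_def Suc_le_eq intro: Max_ge)
    have fin: "finite (set_pmf (tree_pmf \<beta> N))" by (rule finite_set_tree_pmf[OF b])
    have "measure_pmf.expectation (tree_pmf \<beta> N) (\<lambda>hs. \<Prod>j<k. X j hs)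
            \<le> measure_pmf.expectation (tree_pmf \<beta> N) (\<lambda>hs. \<Sum>j<k. 1 + X j hs ^ K)"
      by (intro integral_mono integrable_measure_pmf_finite[OF fin]
          prod_le_sum_one_plus_power[OF k Kk]) (simp add: X_def)
    also have "\<dots> = (\<Sum>j<k. 1 + measure_pmf.expectation (tree_pmf \<beta> N) (\<lambda>hs. X j hs ^ K))"
      by (simp add: integrable_measure_pmf_finite[OF fin])
    also have "\<dots> \<le> (\<Sum>j<k. 1 + B)"
      unfolding X_def using B[OF t] by (intro sum_mono add_left_mono) simp
    finally show "measure_pmf.expectation (tree_pmf \<beta> (m * Max (i ` {..<k})))
             (\<lambda>hs. \<Prod>j<k. real (maxdeg_H m (m * i j) (take (m * i j - 1) hs))
                            / real (m * i j) powr (1 / (2 + \<beta>))) \<le> real k * (1 + B)"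
      by (simp add: X_def N_def)
  qed
qed

end
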